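(* Let $G$ be an odd unicyclic graph on $n$ vertices $1,2,\ldots,n$ with cycle $C$, let $Q$ be its signless Laplacian and $Q^{-1}=[q^+_{i,j}]$ its inverse. Then a vertex $i$ is in $C$ if and only if $q^+_{i,i}=\frac{|C|}{4}$.
   Context: A unicyclic graph on $n$ vertices is a simple connected graph with $n$ edges; it is odd if its unique cycle $C$ has odd length. The signless Laplacian is $Q=D+A$ ($A$ adjacency matrix, $D$ diagonal degree matrix); it is invertible for such graphs. $|C|$ is the number of vertices of $C$. *)

theory Defs
  imports "HOL-Analysis.Analysis"
begin

text \<open>Simple graphs on the finite vertex type 'n (vertices 1..n, n = CARD('n)),
given by a symmetric irreflexive adjacency relation E.\<close>

definition simple_graph :: "('n \<Rightarrow> 'n \<Rightarrow> bool) \<Rightarrow> bool" where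
  "simple_graph E \<longleftrightarrow> (\<forall>u v. E u v \<longrightarrow> E v u) \<and> (\<forall>u. \<not> E u u)"

definition edges :: "('n \<Rightarrow> 'n \<Rightarrow> bool) \<Rightarrow> 'n set set" where
  "edges E = {{u, v} | u v. E u v}"

definition connected_graph :: "('n \<Rightarrow> 'n \<Rightarrow> bool) \<Rightarrow> bool" where
  "connected_graph E \<longleftrightarrow> (\<forall>u v. E\<^sup>*\<^sup>* u v)"

definition unicyclic :: "('n::finite \<Rightarrow> 'n \<Rightarrow> bool) \<Rightarrow> bool" where
  "unicyclic E \<longleftrightarrow> simple_graph E \<and> connected_graph E \<and> card (edges E) = CARD('n)"

definition is_cycle :: "('n \<Rightarrow> 'n \<Rightarrow> bool) \<Rightarrow> 'n list \<Rightarrow> bool" where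
  "is_cycle E cs \<longleftrightarrow> length cs \<ge> 3 \<and> distinct cs \<and>
     (\<forall>i < length cs. E (cs ! i) (cs ! ((i + 1) mod length cs)))"

definition adj_matrix :: "('n::finite \<Rightarrow> 'n \<Rightarrow> bool) \<Rightarrow> real^'n^'n" where
  "adj_matrix E = (\<chi> i j. if E i j then 1 else 0)"

definition degree :: "('n::finite \<Rightarrow> 'n \<Rightarrow> bool) \<Rightarrow> 'n \<Rightarrow> nat" where
  "degree E v = card {w. E v w}"

definition deg_matrix :: "('n::finite \<Rightarrow> 'n \<Rightarrow> bool) \<Rightarrow> real^'n^'n" where
  "deg_matrix E = (\<chi> i j. if i = j then real (degree E i) else 0)"

definition signless_laplacian :: "('n::finite \<Rightarrow> 'n \<Rightarrow> bool) \<Rightarrow> real^'n^'n" where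
  "signless_laplacian E = deg_matrix E + adj_matrix E"

end

theory Submission imports Defs begin

text \<open>Let M be the edge-vertex incidence matrix of G; it is square because G has as many edges
as vertices, and Q = M^T M. A vector y in the kernel of M satisfies y u + y v = 0 on every
edge, so it alternates in sign along C; as C is odd, y vanishes on C and then, by connectivity,
everywhere. Hence M is invertible and the i-th diagonal entry of Q\<inverse> is the squared norm of
the unique edge weighting x with M^T x = e_i, i.e. whose weights at each vertex v sum to
1 if v = i and to 0 otherwise. If i lies on C, x is 1/2, -1/2, 1/2, ... around C starting at i,
with squared norm |C|/4. Otherwise x is 1, -1, 1, ... along a path from i to C followed by
\<plusminus>1/2 around C, and its squared norm exceeds |C|/4 by the length of the path.\<close>

section \<open>Diagonal of the inverse of a Gram matrix\<close>

lemma matrix_inv_right: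
  fixes A :: "'a::semiring_1^'n^'m"
  assumes "invertible A"
  shows "A ** matrix_inv A = mat 1"
  using assms unfolding invertible_def matrix_inv_def
  by (rule someI_ex[where P = "\<lambda>A'. A ** A' = mat 1 \<and> A' ** A = mat 1", THEN conjunct1])

lemma matrix_inv_gram_diag:
  fixes M :: "real^'n^'n"
  assumes M: "invertible M" and x: "transpose M *v x = axis i 1"
  shows "matrix_inv (transpose M ** M) $ i $ i = x \<bullet> x"
proof -
  define y where "y = matrix_inv (transpose M ** M) *v axis i 1"
  have "invertible (transpose M ** M)"
    using M by (simp add: invertible_mult transpose_invertible)
  then have "(transpose M ** M) *v y = axis i 1"
    by (simp add: y_def matrix_vector_mul_assoc matrix_inv_right)
  then have "transpose M *v (M *v y) = transpose M *v x"
    by (simp only: matrix_vector_mul_assoc x)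
  then have My: "M *v y = x"
    using inj_matrix_vector_mult[OF transpose_invertible[OF M]] by (simp only: inj_eq)
  have "matrix_inv (transpose M ** M) $ i $ i = y $ i"
    unfolding y_def matrix_vector_mult_def axis_def by (simp add: if_distrib cong: if_cong)
  also have "\<dots> = (transpose M *v x) \<bullet> y"
    unfolding x by (simp add: cart_eq_inner_axis inner_commute)
  also have "\<dots> = x \<bullet> (M *v y)"
    by (simp add: dot_lmul_matrix)
  finally show ?thesis
    by (simp add: My)
qed

section \<open>The incidence matrix of a graph\<close>

lemma finite_edges: "finite (edges (E :: 'n::finite \<Rightarrow> 'n \<Rightarrow> bool))"
  by (rule finite_subset[of _ UNIV]) auto

lemma card_edges_containing:
  fixes E :: "'n::finite \<Rightarrow> 'n \<Rightarrow> bool"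
  assumes E: "simple_graph E"
  shows "card {e \<in> edges E. u \<in> e \<and> v \<in> e} = (if u = v then degree E u else if E u v then 1 else 0)"
proof (cases "u = v")
  case True
  have "(\<lambda>w. {u, w}) ` {w. E u w} = {e \<in> edges E. u \<in> e}"
  proof safe
    fix e assume "e \<in> edges E" "u \<in> e"
    then obtain a b where "e = {a, b}" "E a b" "u \<in> {a, b}"
      unfolding edges_def by auto
    with E show "e \<in> (\<lambda>w. {u, w}) ` {w. E u w}"
      unfolding simple_graph_def by (auto intro: image_eqI[of _ _ a])
  qed (auto simp: edges_def)
  moreover have "inj_on (\<lambda>w. {u, w}) {w. E u w}"
    by (auto simp: inj_on_def doubleton_eq_iff)
  ultimately show ?thesis
    using True by (simp add: degree_def card_image[symmetric])
next
  case False
  with E have "{e \<in> edges E. u \<in> e \<and> v \<in> e} = (if E u v then {{u, v}} else {})"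
    unfolding simple_graph_def edges_def by auto
  with False show ?thesis
    by simp
qed

text \<open>Row a of the incidence matrix belongs to the edge f a; the rows can be indexed by the
  vertex type because f will be a bijection onto the edges of a graph with as many edges as
  vertices.\<close>

definition incidence_matrix :: "('n::finite \<Rightarrow> 'n set) \<Rightarrow> real^'n^'n" where
  "incidence_matrix f = (\<chi> a v. if v \<in> f a then 1 else 0)"

lemma incidence_matrix_vector: "(incidence_matrix f *v y) $ a = (\<Sum>v\<in>f a. y $ v)"
proof -
  have "(incidence_matrix f *v y) $ a = (\<Sum>v\<in>UNIV. if v \<in> f a then y $ v else 0)"
    unfolding incidence_matrix_def matrix_vector_mult_def by (auto intro!: sum.cong)
  then show ?thesis
    by (simp add: sum.If_cases Int_absorb1)
qed

lemma transpose_incidence_matrix_vector: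
  assumes f: "bij_betw f UNIV (edges E)"
  shows "(transpose (incidence_matrix f) *v (\<chi> a. X (f a))) $ v
    = (\<Sum>e\<in>edges E. if v \<in> e then X e else 0)"
proof -
  have "(transpose (incidence_matrix f) *v (\<chi> a. X (f a))) $ v
      = (\<Sum>a\<in>UNIV. (\<lambda>e. if v \<in> e then X e else 0) (f a))"
    unfolding incidence_matrix_def matrix_vector_mult_def transpose_def by (auto intro!: sum.cong)
  also have "\<dots> = (\<Sum>e\<in>edges E. if v \<in> e then X e else 0)"
    by (rule sum.reindex_bij_betw[OF f])
  finally show ?thesis .
qed

lemma incidence_gram_eq_signless_laplacian:
  assumes E: "simple_graph E" and f: "bij_betw f UNIV (edges E)"
  shows "transpose (incidence_matrix f) ** incidence_matrix f = signless_laplacian E"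
proof -
  have "(transpose (incidence_matrix f) ** incidence_matrix f) $ u $ v = signless_laplacian E $ u $ v"
    for u v
  proof -
    have "(transpose (incidence_matrix f) ** incidence_matrix f) $ u $ v
        = (\<Sum>a\<in>UNIV. (\<lambda>e. if u \<in> e \<and> v \<in> e then 1 else 0) (f a))"
      unfolding incidence_matrix_def matrix_matrix_mult_def transpose_def by (auto intro!: sum.cong)
    also have "\<dots> = (\<Sum>e\<in>edges E. if u \<in> e \<and> v \<in> e then 1 else (0::real))"
      by (rule sum.reindex_bij_betw[OF f])
    also have "\<dots> = real (card {e \<in> edges E. u \<in> e \<and> v \<in> e})"
      by (simp add: sum.If_cases finite_edges Int_def conj_commute)
    also have "\<dots> = signless_laplacian E $ u $ v"
      using E unfolding card_edges_containing[OF E] signless_laplacian_def deg_matrix_def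
        adj_matrix_def simple_graph_def by auto
    finally show ?thesis .
  qed
  then show ?thesis
    by (simp add: vec_eq_iff)
qed

lemma edge_sums_vanish_alternate:
  assumes "successively E P" "P \<noteq> []" "\<And>u v. E u v \<Longrightarrow> y u + y v = (0::real)"
  shows "y (last P) = (-1) ^ (length P - 1) * y (hd P)"
  using assms
proof (induction P rule: induct_list012)
  case (3 x z zs)
  then have "y (last (z # zs)) = (-1) ^ length zs * y z" and "y z = - y x"
    by (auto simp: eq_neg_iff_add_eq_0 add.commute)
  then show ?case
    by simp
qed auto

lemma is_cycle_closed_walk:
  assumes "is_cycle E C"
  shows "successively E C" "E (last C) (hd C)" "distinct C" "length C \<ge> 3"
proof -
  show C: "length C \<ge> 3" "distinct C"
    using assms by (auto simp: is_cycle_def)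
  show "successively E C"
    unfolding successively_conv_nth
  proof (intro allI impI)
    fix j assume j: "Suc j < length C"
    have "\<forall>i < length C. E (C ! i) (C ! (Suc i mod length C))"
      using assms by (simp add: is_cycle_def)
    with j show "E (C ! j) (C ! Suc j)"
      by (metis Suc_lessD mod_less)
  qed
  have "E (C ! (length C - 1)) (C ! ((length C - 1 + 1) mod length C))"
    using assms C unfolding is_cycle_def by simp
  moreover have "length C - 1 + 1 = length C" "C \<noteq> []"
    using C by auto
  ultimately show "E (last C) (hd C)"
    by (simp add: last_conv_nth hd_conv_nth)
qed

lemma edge_sums_vanish_imp_zero:
  assumes conn: "connected_graph E" and C: "is_cycle E C" "odd (length C)"
    and y: "\<And>u v. E u v \<Longrightarrow> y u + y v = (0::real)"
  shows "y v = 0"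
proof -
  note C' = is_cycle_closed_walk[OF C(1)]
  have "y (last C) = (-1) ^ (length C - 1) * y (hd C)"
    using edge_sums_vanish_alternate[of E C y] C'(1,4) y by fastforce
  also have "\<dots> = y (hd C)"
    using C(2) C'(4) by simp
  finally have "y (hd C) = 0"
    using y[OF C'(2)] by simp
  have "E\<^sup>*\<^sup>* (hd C) v"
    using conn by (simp add: connected_graph_def)
  then show ?thesis
    using \<open>y (hd C) = 0\<close>
  proof (induction rule: rtranclp_induct)
    case (step a b)
    then show ?case
      using y[of a b] by simp
  qed
qed

lemma incidence_matrix_invertible:
  assumes E: "simple_graph E" "connected_graph E" and C: "is_cycle E C" "odd (length C)"
    and f: "bij_betw f UNIV (edges E)"
  shows "invertible (incidence_matrix f)"
proof -
  have "y = 0" if My: "incidence_matrix f *v y = 0" for y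
  proof -
    have "y $ u + y $ v = 0" if "E u v" for u v
    proof -
      from that E(1) have "{u, v} \<in> range f" "u \<noteq> v"
        using f by (auto simp: bij_betw_def edges_def simple_graph_def)
      then obtain a where "f a = {u, v}"
        by blast
      with My \<open>u \<noteq> v\<close> show ?thesis
        using incidence_matrix_vector[of f y a] by simp
    qed
    then have "y $ w = 0" for w
      using edge_sums_vanish_imp_zero[OF E(2) C, of "\<lambda>v. y $ v" w] by blast
    then show "y = 0"
      by (simp add: vec_eq_iff)
  qed
  then show ?thesis
    using invertible_left_inverse matrix_left_invertible_ker by blast
qed

lemma signless_laplacian_inv_diag:
  fixes E :: "'n::finite \<Rightarrow> 'n \<Rightarrow> bool"
  assumes G: "unicyclic E" and C: "is_cycle E C" "odd (length C)"
    and X: "\<And>v. (\<Sum>e\<in>edges E. if v \<in> e then X e else 0) = (if v = i then 1 else 0)"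
  shows "matrix_inv (signless_laplacian E) $ i $ i = (\<Sum>e\<in>edges E. (X e)\<^sup>2)"
proof -
  have E: "simple_graph E" "connected_graph E" "card (edges E) = CARD('n)"
    using G by (auto simp: unicyclic_def)
  then obtain f where f: "bij_betw f (UNIV :: 'n set) (edges E)"
    using finite_same_card_bij[of "UNIV :: 'n set" "edges E"] finite_edges by auto
  define x :: "real^'n" where "x = (\<chi> a. X (f a))"
  have "transpose (incidence_matrix f) *v x = axis i 1"
    using transpose_incidence_matrix_vector[OF f] X by (simp add: x_def vec_eq_iff axis_def)
  from matrix_inv_gram_diag[OF incidence_matrix_invertible[OF E(1,2) C f] this]
  have "matrix_inv (signless_laplacian E) $ i $ i = x \<bullet> x"
    unfolding incidence_gram_eq_signless_laplacian[OF E(1) f] .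
  also have "\<dots> = (\<Sum>e\<in>edges E. (X e)\<^sup>2)"
    unfolding x_def inner_vec_def
    using sum.reindex_bij_betw[OF f, of "\<lambda>e. (X e)\<^sup>2"] by (simp add: power2_eq_square)
  finally show ?thesis .
qed

section \<open>Edge weightings\<close>

text \<open>Edge weightings are built along walks as lists of (edge, weight) pairs; when its edges
  are distinct, such a list represents the weighting edge_weight.\<close>

type_synonym 'a weighted_edges = "('a set \<times> real) list"

definition incident_weight :: "'a weighted_edges \<Rightarrow> 'a \<Rightarrow> real" where
  "incident_weight L v = (\<Sum>(e, w)\<leftarrow>L. if v \<in> e then w else 0)"

definition edge_weight :: "'a weighted_edges \<Rightarrow> 'a set \<Rightarrow> real" where
  "edge_weight L e = (\<Sum>(e', w)\<leftarrow>L. if e' = e then w else 0)"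

definition square_weight :: "'a weighted_edges \<Rightarrow> real" where
  "square_weight L = (\<Sum>(e, w)\<leftarrow>L. w\<^sup>2)"

definition scale_weights :: "real \<Rightarrow> 'a weighted_edges \<Rightarrow> 'a weighted_edges" where
  "scale_weights c L = map (\<lambda>(e, w). (e, c * w)) L"

lemma incident_weight_simps [simp]:
  "incident_weight [] v = 0"
  "incident_weight ((e, w) # L) v = (if v \<in> e then w else 0) + incident_weight L v"
  "incident_weight (L @ L') v = incident_weight L v + incident_weight L' v"
  by (simp_all add: incident_weight_def)

lemma edge_weight_simps [simp]:
  "edge_weight [] e = 0"
  "edge_weight ((e', w) # L) e = (if e' = e then w else 0) + edge_weight L e"
  by (simp_all add: edge_weight_def)

lemma square_weight_simps [simp]:
  "square_weight [] = 0"
  "square_weight ((e, w) # L) = w\<^sup>2 + square_weight L"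
  "square_weight (L @ L') = square_weight L + square_weight L'"
  by (simp_all add: square_weight_def)

lemma incident_weight_scale_weights [simp]:
  "incident_weight (scale_weights c L) v = c * incident_weight L v"
  by (induction L) (auto simp: scale_weights_def algebra_simps)

lemma square_weight_scale_weights [simp]:
  "square_weight (scale_weights c L) = c\<^sup>2 * square_weight L"
  by (induction L) (auto simp: scale_weights_def power_mult_distrib algebra_simps)

lemma map_fst_scale_weights [simp]: "map fst (scale_weights c L) = map fst L"
  by (induction L) (auto simp: scale_weights_def)

lemma fst_set_scale_weights [simp]: "fst ` set (scale_weights c L) = fst ` set L"
  by (metis map_fst_scale_weights set_map)

lemma edge_weight_eq_0: "e \<notin> fst ` set L \<Longrightarrow> edge_weight L e = 0"
proof (induction L)
  case (Cons p L)
  then show ?case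
    by (cases p) auto
qed simp

lemma sum_incident_edge_weight:
  assumes S: "finite S" and L: "fst ` set L \<subseteq> S"
  shows "(\<Sum>e\<in>S. if v \<in> e then edge_weight L e else 0) = incident_weight L v"
  using L
proof (induction L)
  case (Cons p L)
  obtain e0 w0 where p: "p = (e0, w0)"
    by fastforce
  have "(\<Sum>e\<in>S. if v \<in> e then edge_weight (p # L) e else 0)
      = (\<Sum>e\<in>S. if e0 = e then (if v \<in> e0 then w0 else 0) else 0)
        + (\<Sum>e\<in>S. if v \<in> e then edge_weight L e else 0)"
    unfolding sum.distrib[symmetric] p by (auto intro!: sum.cong)
  also have "\<dots> = (if v \<in> e0 then w0 else 0) + incident_weight L v"
    using Cons S p by (simp add: sum.delta)
  finally show ?case
    by (simp add: p)
qed (simp cong: if_cong)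

lemma sum_square_edge_weight:
  assumes S: "finite S" and L: "fst ` set L \<subseteq> S" "distinct (map fst L)"
  shows "(\<Sum>e\<in>S. (edge_weight L e)\<^sup>2) = square_weight L"
  using L
proof (induction L)
  case (Cons p L)
  obtain e0 w0 where p: "p = (e0, w0)"
    by fastforce
  have "(\<Sum>e\<in>S. (edge_weight (p # L) e)\<^sup>2)
      = (\<Sum>e\<in>S. if e0 = e then w0\<^sup>2 else 0) + (\<Sum>e\<in>S. (edge_weight L e)\<^sup>2)"
    unfolding sum.distrib[symmetric] p
    using Cons.prems edge_weight_eq_0[of e0 L] by (auto simp: p intro!: sum.cong)
  also have "\<dots> = w0\<^sup>2 + square_weight L"
    using Cons S p by (simp add: sum.delta)
  finally show ?case
    by (simp add: p)
qed simp

lemma signless_laplacian_inv_diag_weighted_edges: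
  fixes E :: "'n::finite \<Rightarrow> 'n \<Rightarrow> bool"
  assumes "unicyclic E" "is_cycle E C" "odd (length C)"
    and "fst ` set L \<subseteq> edges E" "distinct (map fst L)"
    and "\<And>v. incident_weight L v = (if v = i then 1 else 0)"
  shows "matrix_inv (signless_laplacian E) $ i $ i = square_weight L"
  using signless_laplacian_inv_diag[OF assms(1-3), of "edge_weight L" i] assms(4-6)
  by (simp add: sum_incident_edge_weight sum_square_edge_weight finite_edges)

section \<open>Alternating weightings along paths and cycles\<close>

lemma is_cycle_rotate:
  assumes "is_cycle E C"
  shows "is_cycle E (rotate k C)"
  unfolding is_cycle_def
proof (intro conjI allI impI)
  let ?n = "length C"
  fix j assume "j < length (rotate k C)"
  then have j: "j < ?n"
    by simp
  then have jk: "(k + j) mod ?n < ?n" and j1: "(j + 1) mod ?n < ?n"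
    by (intro mod_less_divisor; linarith)+
  have "E (C ! ((k + j) mod ?n)) (C ! (((k + j) mod ?n + 1) mod ?n))"
    using assms jk unfolding is_cycle_def by blast
  moreover have "((k + j) mod ?n + 1) mod ?n = (k + (j + 1) mod ?n) mod ?n"
    by (simp add: mod_simps add.assoc)
  ultimately show "E (rotate k C ! j) (rotate k C ! ((j + 1) mod length (rotate k C)))"
    using j j1 by (simp add: nth_rotate)
qed (use assms in \<open>auto simp: is_cycle_def\<close>)

lemma is_cycle_rotate_to:
  assumes "is_cycle E C" "r \<in> set C"
  obtains D where "is_cycle E D" "hd D = r" "set D = set C" "length D = length C"
proof -
  obtain k where "k < length C" "C ! k = r"
    using assms(2) by (meson in_set_conv_nth)
  moreover from this have "C \<noteq> []"
    by auto
  ultimately show ?thesis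
    using that[of "rotate k C"] is_cycle_rotate[OF assms(1)] hd_rotate_conv_nth[of C k] by auto
qed

fun alternating_path :: "'a list \<Rightarrow> 'a weighted_edges" where
  "alternating_path [] = []"
| "alternating_path [x] = []"
| "alternating_path (x # y # xs) = ({x, y}, 1) # scale_weights (-1) (alternating_path (y # xs))"

lemma incident_weight_alternating_path:
  assumes "P \<noteq> []" "distinct_adj P"
  shows "incident_weight (alternating_path P) v
    = (if v = hd P then 1 else 0) + (-1) ^ length P * (if v = last P then 1 else 0)"
  using assms by (induction P rule: alternating_path.induct) auto

lemma square_weight_alternating_path: "square_weight (alternating_path P) = real (length P - 1)"
  by (induction P rule: alternating_path.induct) auto

lemma alternating_path_edges: "successively E P \<Longrightarrow> fst ` set (alternating_path P) \<subseteq> edges E"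
  by (induction P rule: alternating_path.induct) (auto simp: edges_def)

lemma alternating_path_edge_subset: "e \<in> fst ` set (alternating_path P) \<Longrightarrow> e \<subseteq> set P"
  by (induction P rule: alternating_path.induct) auto

lemma distinct_alternating_path: "distinct P \<Longrightarrow> distinct (map fst (alternating_path P))"
proof (induction P rule: alternating_path.induct)
  case (3 x y xs)
  then show ?case
    using alternating_path_edge_subset[of "{x, y}" "y # xs"] by auto
qed auto

text \<open>For odd length D, weight 1 on the closing edge continues the alternation of signs.\<close>

definition half_cycle :: "'a list \<Rightarrow> 'a weighted_edges" where
  "half_cycle D = scale_weights (1/2) (alternating_path D @ [({last D, hd D}, 1)])"

lemma incident_weight_half_cycle:
  assumes "distinct D" "odd (length D)" "length D \<ge> 3"
  shows "incident_weight (half_cycle D) v = (if v = hd D then 1 else 0)"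
proof -
  have "D \<noteq> []" "distinct_adj D"
    using assms by (auto simp: distinct_adj_conv_nth nth_eq_iff_index_eq)
  moreover have "last D \<noteq> hd D"
    using assms by (cases D) (auto simp: last_in_set)
  ultimately show ?thesis
    using assms(2) by (auto simp: half_cycle_def incident_weight_alternating_path)
qed

lemma square_weight_half_cycle: "D \<noteq> [] \<Longrightarrow> square_weight (half_cycle D) = real (length D) / 4"
  by (cases D) (auto simp: half_cycle_def square_weight_alternating_path power2_eq_square)

lemma half_cycle_edges:
  "successively E D \<Longrightarrow> E (last D) (hd D) \<Longrightarrow> fst ` set (half_cycle D) \<subseteq> edges E"
  using alternating_path_edges[of E D] by (auto simp: half_cycle_def edges_def)

lemma half_cycle_edge_subset: "e \<in> fst ` set (half_cycle D) \<Longrightarrow> D \<noteq> [] \<Longrightarrow> e \<subseteq> set D"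
  using alternating_path_edge_subset[of e D] by (auto simp: half_cycle_def)

lemma distinct_half_cycle:
  assumes "distinct D" "length D \<ge> 3"
  shows "distinct (map fst (half_cycle D))"
proof -
  obtain x y zs where D: "D = x # y # zs"
    using assms by (cases D rule: alternating_path.cases) auto
  have x: "x \<notin> set (y # zs)" and "last (y # zs) \<noteq> y"
    using assms D by (auto simp: last_in_set)
  then have "{last (y # zs), x} \<noteq> {x, y}"
    by (auto simp: doubleton_eq_iff)
  moreover have "{last (y # zs), x} \<notin> fst ` set (alternating_path (y # zs))"
    using alternating_path_edge_subset x by blast
  ultimately show ?thesis
    using distinct_alternating_path[OF assms(1)] by (simp add: half_cycle_def D)
qed

fun walk_into :: "('a \<Rightarrow> 'a \<Rightarrow> bool) \<Rightarrow> 'a set \<Rightarrow> 'a list \<Rightarrow> bool" where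
  "walk_into E S [] = False"
| "walk_into E S [x] = (x \<in> S)"
| "walk_into E S (x # y # xs) = (E x y \<and> x \<notin> S \<and> walk_into E S (y # xs))"

lemma walk_into_suffix: "walk_into E S (xs @ ys) \<Longrightarrow> ys \<noteq> [] \<Longrightarrow> walk_into E S ys"
proof (induction xs)
  case (Cons x xs)
  then show ?case
    by (cases "xs @ ys") auto
qed simp

lemma walk_into_walk: "walk_into E S P \<Longrightarrow> P \<noteq> [] \<and> successively E P \<and> last P \<in> S"
  by (induction E S P rule: walk_into.induct) auto

lemma walk_into_edge_not_subset:
  "walk_into E S P \<Longrightarrow> e \<in> fst ` set (alternating_path P) \<Longrightarrow> \<not> e \<subseteq> S"
  by (induction E S P rule: walk_into.induct) auto

lemma exists_walk_into:
  assumes "E\<^sup>*\<^sup>* u t" "t \<in> S"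
  shows "\<exists>P. walk_into E S P \<and> distinct P \<and> hd P = u"
  using assms
proof (induction rule: converse_rtranclp_induct)
  case base
  then show ?case
    by (intro exI[of _ "[t]"]) auto
next
  case (step u w)
  then obtain P where P: "walk_into E S P" "distinct P" "hd P = w"
    by auto
  consider "u \<in> S" | "u \<notin> S" "u \<in> set P" | "u \<notin> S" "u \<notin> set P"
    by blast
  then show ?case
  proof cases
    case 1
    then show ?thesis
      by (intro exI[of _ "[u]"]) auto
  next
    case 2
    then obtain xs ys where "P = xs @ u # ys"
      by (meson split_list)
    with P show ?thesis
      by (intro exI[of _ "u # ys"]) (auto dest: walk_into_suffix)
  next
    case 3
    with P step.hyps(1) show ?thesis
      by (intro exI[of _ "u # P"]) (cases P, auto)
  qed
qed

text \<open>The scale factor cancels the weight that the path leaves at its end last P, where the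
  half cycle puts weight 1.\<close>

lemma incident_weight_path_then_half_cycle:
  assumes P: "P \<noteq> []" "distinct_adj P"
    and D: "distinct D" "odd (length D)" "length D \<ge> 3" "hd D = last P"
  shows "incident_weight (alternating_path P @ scale_weights (- ((-1) ^ length P)) (half_cycle D)) v
    = (if v = hd P then 1 else 0)"
  using incident_weight_alternating_path[OF P] incident_weight_half_cycle[OF D(1-3)] D(4)
  by simp

lemma signless_laplacian_inv_diag_on_cycle:
  fixes E :: "'n::finite \<Rightarrow> 'n \<Rightarrow> bool"
  assumes G: "unicyclic E" and C: "is_cycle E C" "odd (length C)" and i: "i \<in> set C"
  shows "matrix_inv (signless_laplacian E) $ i $ i = real (length C) / 4"
proof -
  obtain D where D: "is_cycle E D" "hd D = i" "length D = length C"
    using is_cycle_rotate_to[OF C(1) i] by blast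
  note D' = is_cycle_closed_walk[OF D(1)]
  have "matrix_inv (signless_laplacian E) $ i $ i = square_weight (half_cycle D)"
    by (rule signless_laplacian_inv_diag_weighted_edges[OF G C
          half_cycle_edges[OF D'(1,2)] distinct_half_cycle[OF D'(3,4)]])
      (use D C(2) D'(3,4) in \<open>simp add: incident_weight_half_cycle\<close>)
  also have "\<dots> = real (length C) / 4"
    using D(3) D'(4) by (subst square_weight_half_cycle) auto
  finally show ?thesis .
qed

lemma signless_laplacian_inv_diag_off_cycle:
  fixes E :: "'n::finite \<Rightarrow> 'n \<Rightarrow> bool"
  assumes G: "unicyclic E" and C: "is_cycle E C" "odd (length C)" and i: "i \<notin> set C"
  shows "matrix_inv (signless_laplacian E) $ i $ i > real (length C) / 4"
proof -
  have E: "simple_graph E" "connected_graph E"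
    using G by (auto simp: unicyclic_def)
  have "C \<noteq> []"
    using is_cycle_closed_walk(4)[OF C(1)] by auto
  then have "E\<^sup>*\<^sup>* i (hd C)" "hd C \<in> set C"
    using E(2) by (simp_all add: connected_graph_def)
  then obtain P where P: "walk_into E (set C) P" "distinct P" "hd P = i"
    using exists_walk_into[of E i "hd C" "set C"] by blast
  have P': "P \<noteq> []" "successively E P" "last P \<in> set C"
    using walk_into_walk[OF P(1)] by auto
  with E(1) have "distinct_adj P"
    unfolding distinct_adj_def simple_graph_def by (auto elim: successively_mono)
  have "length P \<ge> 2"
    using P' P(3) i by (cases P rule: alternating_path.cases) auto
  obtain D where D: "is_cycle E D" "hd D = last P" "set D = set C" "length D = length C"
    using is_cycle_rotate_to[OF C(1) P'(3)] by blast
  note D' = is_cycle_closed_walk[OF D(1)]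
  then have "D \<noteq> []"
    by auto
  define L where "L = alternating_path P @ scale_weights (- ((-1) ^ length P)) (half_cycle D)"
  have disjoint: "fst ` set (alternating_path P) \<inter> fst ` set (half_cycle D) = {}"
    using walk_into_edge_not_subset[OF P(1)] half_cycle_edge_subset[OF _ \<open>D \<noteq> []\<close>] D(3)
    by blast
  have "matrix_inv (signless_laplacian E) $ i $ i = square_weight L"
  proof (rule signless_laplacian_inv_diag_weighted_edges[OF G C])
    show "fst ` set L \<subseteq> edges E"
      using alternating_path_edges[OF P'(2)] half_cycle_edges[OF D'(1,2)]
      by (simp add: L_def image_Un)
    show "distinct (map fst L)"
      using disjoint distinct_alternating_path[OF P(2)] distinct_half_cycle[OF D'(3,4)]
      by (simp add: L_def)
    show "incident_weight L v = (if v = i then 1 else 0)" for v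
      using incident_weight_path_then_half_cycle[OF P'(1) \<open>distinct_adj P\<close> D'(3) _ D'(4) D(2)]
        C(2) D(4) P(3) by (simp add: L_def)
  qed
  also have "\<dots> = real (length P - 1) + real (length C) / 4"
    using \<open>D \<noteq> []\<close> D(4)
    by (simp add: L_def square_weight_alternating_path square_weight_half_cycle flip: power_mult)
  finally show ?thesis
    using \<open>length P \<ge> 2\<close> by simp
qed

theorem mainTheorem13:
  fixes E :: "'n::finite \<Rightarrow> 'n \<Rightarrow> bool" and C :: "'n list" and i :: 'n
  assumes "unicyclic E"
    and "is_cycle E C"
    and "odd (length C)"
  shows "i \<in> set C \<longleftrightarrow> matrix_inv (signless_laplacian E) $ i $ i = real (length C) / 4"
  using signless_laplacian_inv_diag_on_cycle[OF assms] signless_laplacian_inv_diag_off_cycle[OF assms]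
  by fastforce

end
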